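(* Let $h_m:[a,b]\to[c_m,d_m]$ ($m\in\mathcal M\subset\mathbb N$) be continuous increasing functions such that $\sum_{m\in\mathcal M}h_m(x)<\infty$ for all $x\in[a,b]$. Let $K\subset[a,b]$ be closed with $\lambda(h_m(K))=0$ for all $m\in\mathcal M$. Then $h(x):=\sum_{m\in\mathcal M}h_m(x)$ defines a continuous increasing function $h:[a,b]\to[c,d]$ (for some $c,d\in\mathbb R$) with $\lambda(h(K))=0$.
   Context: $\lambda$ denotes Lebesgue measure on $\mathbb R$. *)

theory Defs
  imports "HOL-Analysis.Analysis"
begin

end

theory Submission
  imports Defs
begin

text \<open>
  For a continuous strictly increasing \<open>f\<close> on \<open>[a,b]\<close>, the map \<open>A \<mapsto> \<lambda>(f(A))\<close> is a finite
  Borel measure: it is Lebesgue measure on \<open>f([a,b])\<close> pulled back along the continuous inverse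
  of \<open>f\<close>. It gives the ray \<open>(x,\<infinity>)\<close> the mass \<open>f(b) - f(x)\<close> for \<open>x \<in> [a,b]\<close>, which is
  additive in \<open>f\<close>. A finite measure on \<open>\<real>\<close> is determined by its values on rays, so the measure
  belonging to \<open>h = \<Sum>h\<^sub>m\<close> is the sum of those belonging to the \<open>h\<^sub>m\<close>, and it vanishes on \<open>K\<close>.
  Continuity of \<open>h\<close> comes from the M-test: \<open>0 \<le> h\<^sub>m(x) - h\<^sub>m(a) \<le> h\<^sub>m(b) - h\<^sub>m(a)\<close>.
\<close>

definition image_lborel :: "'a::euclidean_space set \<Rightarrow> ('a \<Rightarrow> 'b::euclidean_space) \<Rightarrow> 'a measure"
  where "image_lborel S f = distr (restrict_space lborel (f ` S)) borel (the_inv_into S f)"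

lemma sets_image_lborel [simp, measurable_cong]: "sets (image_lborel S f) = sets borel"
  by (simp add: image_lborel_def)

lemma emeasure_image_lborel:
  fixes f :: "'a::euclidean_space \<Rightarrow> 'b::euclidean_space"
  assumes S: "compact S" and f: "continuous_on S f" "inj_on f S" and A: "A \<in> sets borel"
  shows "emeasure (image_lborel S f) A = emeasure lborel (f ` (A \<inter> S))"
proof -
  let ?g = "the_inv_into S f" and ?N = "restrict_space lborel (f ` S)"
  have fS: "f ` S \<in> sets lborel"
    using compact_continuous_image[OF f(1) S] by (simp add: compact_imp_closed)
  have "?g \<in> borel_measurable (restrict_space borel (f ` S))"
    using continuous_on_inv_into[OF f(1) S f(2)] by (rule borel_measurable_continuous_on_restrict)
  then have g: "?g \<in> borel_measurable ?N"
    by (simp cong: measurable_cong_sets add: sets_restrict_space)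
  have preimage: "?g -` A \<inter> f ` S = f ` (A \<inter> S)"
    using f(2) by (auto simp: the_inv_into_f_f)
  have "emeasure (image_lborel S f) A = emeasure ?N (?g -` A \<inter> f ` S)"
    unfolding image_lborel_def using emeasure_distr[OF g A] by (simp add: space_restrict_space)
  also have "\<dots> = emeasure lborel (f ` (A \<inter> S))"
    using emeasure_restrict_space[of "f ` S" lborel] fS by (simp add: preimage image_mono)
  finally show ?thesis .
qed

definition suminf_measure :: "'a measure \<Rightarrow> (nat \<Rightarrow> 'a measure) \<Rightarrow> 'a measure"
  where "suminf_measure M N = measure_of (space M) (sets M) (\<lambda>A. \<Sum>m. emeasure (N m) A)"

lemma sets_suminf_measure [simp, measurable_cong]: "sets (suminf_measure M N) = sets M"
  by (simp add: suminf_measure_def)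

lemma emeasure_suminf_measure:
  assumes N: "\<And>m. sets (N m) = sets M" and A: "A \<in> sets M"
  shows "emeasure (suminf_measure M N) A = (\<Sum>m. emeasure (N m) A)"
  unfolding suminf_measure_def
proof (rule emeasure_measure_of_sigma[OF sets.sigma_algebra_axioms _ _ A])
  show "positive (sets M) (\<lambda>A. \<Sum>m. emeasure (N m) A)"
    by (simp add: positive_def)
  show "countably_additive (sets M) (\<lambda>A. \<Sum>m. emeasure (N m) A)"
    unfolding countably_additive_def
  proof (intro allI impI)
    fix A :: "nat \<Rightarrow> 'a set"
    assume A: "range A \<subseteq> sets M" "disjoint_family A" "\<Union> (range A) \<in> sets M"
    have "(\<Sum>i. \<Sum>m. emeasure (N m) (A i)) = (\<integral>\<^sup>+ i. (\<Sum>m. emeasure (N m) (A i)) \<partial>count_space UNIV)"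
      by (simp add: nn_integral_count_space_nat)
    also have "\<dots> = (\<Sum>m. \<integral>\<^sup>+ i. emeasure (N m) (A i) \<partial>count_space UNIV)"
      by (rule nn_integral_suminf) simp
    also have "\<dots> = (\<Sum>m. emeasure (N m) (\<Union>i. A i))"
      using A N by (simp add: nn_integral_count_space_nat suminf_emeasure)
    finally show "(\<Sum>i. \<Sum>m. emeasure (N m) (A i)) = (\<Sum>m. emeasure (N m) (\<Union> (range A)))" .
  qed
qed

lemma continuous_mono_on_image_Icc:
  fixes f :: "'a::linear_continuum_topology \<Rightarrow> 'b::linorder_topology"
  assumes "x \<le> y" "continuous_on {x..y} f" "mono_on {x..y} f"
  shows "f ` {x..y} = {f x..f y}"
proof
  show "f ` {x..y} \<subseteq> {f x..f y}"
    using assms(1) by (auto intro!: mono_onD[OF assms(3)])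
  show "{f x..f y} \<subseteq> f ` {x..y}"
    using IVT'[of f x _ y] assms(1,2) by force
qed

lemma emeasure_image_greaterThan:
  fixes f :: "real \<Rightarrow> real"
  assumes ab: "a \<le> b" and f: "continuous_on {a..b} f" "strict_mono_on {a..b} f"
  shows "emeasure lborel (f ` ({x<..} \<inter> {a..b})) = ennreal (f b - f (max a (min b x)))"
proof -
  have image_Icc: "f ` {t..b} = {f t..f b}" if "t \<in> {a..b}" for t
    using that f by (intro continuous_mono_on_image_Icc continuous_on_subset[OF f(1)]
        mono_on_subset[OF strict_mono_on_imp_mono_on[OF f(2)]]) auto
  consider "x < a" | "x \<in> {a..b}" | "b < x" by force
  then show ?thesis
  proof cases
    case 1
    then have "{x<..} \<inter> {a..b} = {a..b}" by auto
    then show ?thesis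
      using 1 ab image_Icc[of a] strict_mono_on_leD[OF f(2), of a b] by simp
  next
    case 2
    have "{x<..} \<inter> {a..b} = {x..b} - {x}" using 2 by auto
    moreover have "f ` ({x..b} - {x}) = f ` {x..b} - f ` {x}"
      using 2 by (intro inj_on_image_set_diff[OF strict_mono_on_imp_inj_on[OF f(2)]]) auto
    ultimately have "f ` ({x<..} \<inter> {a..b}) = f ` {x..b} - f ` {x}" by simp
    also have "\<dots> = {f x..f b} - {f x}" using 2 image_Icc by simp
    also have "\<dots> = {f x<..f b}" by auto
    finally show ?thesis
      using 2 strict_mono_on_leD[OF f(2), of x b] by simp
  next
    case 3
    then have "{x<..} \<inter> {a..b} = {}" by auto
    then show ?thesis using 3 ab by simp
  qed
qed

lemma continuous_on_suminf_mono:
  fixes F :: "nat \<Rightarrow> real \<Rightarrow> real"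
  assumes cont: "\<And>m. continuous_on {a..b} (F m)" and mono: "\<And>m. mono_on {a..b} (F m)"
    and summ: "\<And>x. x \<in> {a..b} \<Longrightarrow> summable (\<lambda>m. F m x)"
  shows "continuous_on {a..b} (\<lambda>x. \<Sum>m. F m x)"
proof (cases "a \<le> b")
  case True
  then have a: "a \<in> {a..b}" and b: "b \<in> {a..b}" by auto
  define D where "D m x = F m x - F m a" for m x
  have uniform: "uniform_limit {a..b} (\<lambda>n x. \<Sum>m<n. D m x) (\<lambda>x. \<Sum>m. D m x) sequentially"
  proof (rule Weierstrass_m_test)
    show "norm (D m x) \<le> D m b" if "x \<in> {a..b}" for m x
      using mono_onD[OF mono a that] mono_onD[OF mono that b] that by (auto simp: D_def)
    show "summable (\<lambda>m. D m b)"
      unfolding D_def using summ[OF b] summ[OF a] by (rule summable_diff)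
  qed
  have partial_sums: "continuous_on {a..b} (\<lambda>x. \<Sum>m<n. D m x)" for n
    unfolding D_def by (intro continuous_on_sum continuous_on_diff cont continuous_on_const)
  have "continuous_on {a..b} (\<lambda>x. \<Sum>m. D m x)"
    by (rule uniform_limit_theorem[OF always_eventually[OF allI[OF partial_sums]] uniform sequentially_bot])
  then have "continuous_on {a..b} (\<lambda>x. (\<Sum>m. D m x) + (\<Sum>m. F m a))"
    by (intro continuous_on_add continuous_on_const)
  then show ?thesis
  proof (rule continuous_on_eq)
    show "(\<Sum>m. D m x) + (\<Sum>m. F m a) = (\<Sum>m. F m x)" if "x \<in> {a..b}" for x
      unfolding D_def using suminf_diff[OF summ[OF that] summ[OF a]] by simp
  qed
qed simp

lemma strict_mono_on_suminf:
  fixes F :: "nat \<Rightarrow> 'a::linorder \<Rightarrow> real"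
  assumes mono: "\<And>m. mono_on S (F m)" and strict: "strict_mono_on S (F k)"
    and summ: "\<And>x. x \<in> S \<Longrightarrow> summable (\<lambda>m. F m x)"
  shows "strict_mono_on S (\<lambda>x. \<Sum>m. F m x)"
proof (rule strict_mono_onI)
  fix x y assume xy: "x \<in> S" "y \<in> S" "x < y"
  have "0 < (\<Sum>m. F m y - F m x)"
  proof (rule suminf_pos2)
    show "summable (\<lambda>m. F m y - F m x)" using summ xy by (intro summable_diff)
    show "0 \<le> F m y - F m x" for m using mono_onD[OF mono] xy by fastforce
    show "0 < F k y - F k x" using strict_mono_onD[OF strict] xy by simp
  qed
  also have "\<dots> = (\<Sum>m. F m y) - (\<Sum>m. F m x)"
    using suminf_diff[OF summ summ] xy by simp
  finally show "(\<Sum>m. F m x) < (\<Sum>m. F m y)" by simp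
qed

lemma continuous_strict_mono_on_suminf:
  fixes h :: "nat \<Rightarrow> real \<Rightarrow> real"
  assumes M: "M \<noteq> {}"
    and cont: "\<And>m. m \<in> M \<Longrightarrow> continuous_on {a..b} (h m)"
    and incr: "\<And>m. m \<in> M \<Longrightarrow> strict_mono_on {a..b} (h m)"
    and summ: "\<And>x. x \<in> {a..b} \<Longrightarrow> summable (\<lambda>m. if m \<in> M then h m x else 0)"
  shows "continuous_on {a..b} (\<lambda>x. \<Sum>m. if m \<in> M then h m x else 0)"
    and "strict_mono_on {a..b} (\<lambda>x. \<Sum>m. if m \<in> M then h m x else 0)"
proof -
  define F where "F = (\<lambda>m x. if m \<in> M then h m x else 0)"
  have contF: "continuous_on {a..b} (F m)" for m
    using cont[of m] by (cases "m \<in> M") (simp_all add: F_def)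
  have monoF: "mono_on {a..b} (F m)" for m
    by (auto simp: mono_on_def F_def intro: strict_mono_on_leD[OF incr])
  obtain k where "k \<in> M" using M by blast
  then have strictF: "strict_mono_on {a..b} (F k)"
    using incr by (simp add: F_def)
  have summF: "summable (\<lambda>m. F m x)" if "x \<in> {a..b}" for x
    using summ[OF that] by (simp add: F_def)
  show "continuous_on {a..b} (\<lambda>x. \<Sum>m. if m \<in> M then h m x else 0)"
    using continuous_on_suminf_mono[OF contF monoF summF] by (simp add: F_def)
  show "strict_mono_on {a..b} (\<lambda>x. \<Sum>m. if m \<in> M then h m x else 0)"
    using strict_mono_on_suminf[OF monoF strictF summF] by (simp add: F_def)
qed

lemma image_lborel_suminf:
  fixes h :: "nat \<Rightarrow> real \<Rightarrow> real"
  assumes ab: "a \<le> b" and M: "M \<noteq> {}"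
    and cont: "\<And>m. m \<in> M \<Longrightarrow> continuous_on {a..b} (h m)"
    and incr: "\<And>m. m \<in> M \<Longrightarrow> strict_mono_on {a..b} (h m)"
    and summ: "\<And>x. x \<in> {a..b} \<Longrightarrow> summable (\<lambda>m. if m \<in> M then h m x else 0)"
  shows "image_lborel {a..b} (\<lambda>x. \<Sum>m. if m \<in> M then h m x else 0) =
    suminf_measure borel (\<lambda>m. if m \<in> M then image_lborel {a..b} (h m) else null_measure borel)"
    (is "image_lborel _ ?H = suminf_measure borel ?N")
proof -
  define F where "F = (\<lambda>m x. if m \<in> M then h m x else 0)"
  have summF: "summable (\<lambda>m. F m x)" if "x \<in> {a..b}" for x
    using summ[OF that] by (simp add: F_def)
  have image_lborel_greaterThan:
    "emeasure (image_lborel {a..b} g) {x<..} = ennreal (g b - g (max a (min b x)))"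
    if "continuous_on {a..b} g" "strict_mono_on {a..b} g" for g x
    using that emeasure_image_lborel[of "{a..b}" g] emeasure_image_greaterThan[OF ab that]
    by (simp add: strict_mono_on_imp_inj_on)
  note H = continuous_strict_mono_on_suminf[OF M cont incr summ]
  show ?thesis
  proof (rule measure_eqI_lessThan)
    show "emeasure (image_lborel {a..b} ?H) {x<..} < \<infinity>" for x
      using image_lborel_greaterThan[OF H] by simp
    fix x
    define c where "c = max a (min b x)"
    have c: "c \<in> {a..b}" using ab by (auto simp: c_def)
    have "emeasure (?N m) {x<..} = ennreal (F m b - F m c)" for m
      using image_lborel_greaterThan[OF cont incr, of m x]
      by (cases "m \<in> M") (simp_all add: F_def c_def)
    then have "emeasure (suminf_measure borel ?N) {x<..} = (\<Sum>m. ennreal (F m b - F m c))"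
      by (simp add: emeasure_suminf_measure)
    also have "\<dots> = ennreal (\<Sum>m. F m b - F m c)"
    proof (rule suminf_ennreal2)
      show "0 \<le> F m b - F m c" for m
        using c strict_mono_on_leD[OF incr, of m c b] by (simp add: F_def)
      show "summable (\<lambda>m. F m b - F m c)"
        using summF c ab by (intro summable_diff) auto
    qed
    also have "(\<Sum>m. F m b - F m c) = ?H b - ?H c"
      using suminf_diff[OF summF summF, of b c] c ab by (simp add: F_def)
    also have "ennreal (?H b - ?H c) = emeasure (image_lborel {a..b} ?H) {x<..}"
      unfolding c_def by (rule image_lborel_greaterThan[OF H, symmetric])
    finally show "emeasure (image_lborel {a..b} ?H) {x<..} = emeasure (suminf_measure borel ?N) {x<..}" ..
  qed simp_all
qed

lemma emeasure_image_suminf: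
  fixes h :: "nat \<Rightarrow> real \<Rightarrow> real"
  assumes ab: "a \<le> b" and M: "M \<noteq> {}"
    and cont: "\<And>m. m \<in> M \<Longrightarrow> continuous_on {a..b} (h m)"
    and incr: "\<And>m. m \<in> M \<Longrightarrow> strict_mono_on {a..b} (h m)"
    and summ: "\<And>x. x \<in> {a..b} \<Longrightarrow> summable (\<lambda>m. if m \<in> M then h m x else 0)"
    and A: "A \<in> sets borel" "A \<subseteq> {a..b}"
  shows "emeasure lborel ((\<lambda>x. \<Sum>m. if m \<in> M then h m x else 0) ` A) =
    (\<Sum>m. if m \<in> M then emeasure lborel (h m ` A) else 0)"
    (is "emeasure lborel (?H ` A) = _")
proof -
  let ?N = "\<lambda>m. if m \<in> M then image_lborel {a..b} (h m) else null_measure borel"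
  note H = continuous_strict_mono_on_suminf[OF M cont incr summ]
  have "emeasure lborel (?H ` A) = emeasure (image_lborel {a..b} ?H) A"
    using emeasure_image_lborel[OF compact_Icc H(1) strict_mono_on_imp_inj_on[OF H(2)] A(1)] A(2)
    by (simp add: Int_absorb2)
  also have "\<dots> = emeasure (suminf_measure borel ?N) A"
    using image_lborel_suminf[OF ab M cont incr summ] by simp
  also have "\<dots> = (\<Sum>m. emeasure (?N m) A)"
    by (rule emeasure_suminf_measure) (simp_all add: A)
  also have "\<dots> = (\<Sum>m. if m \<in> M then emeasure lborel (h m ` A) else 0)"
  proof (rule suminf_cong)
    show "emeasure (?N m) A = (if m \<in> M then emeasure lborel (h m ` A) else 0)" for m
      using emeasure_image_lborel[OF compact_Icc cont strict_mono_on_imp_inj_on[OF incr] A(1), of m] A(2)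
      by (cases "m \<in> M") (simp_all add: Int_absorb2)
  qed
  finally show ?thesis .
qed

lemma closed_null_sets_lebesgue_iff:
  fixes A :: "'a::euclidean_space set"
  assumes "closed A"
  shows "A \<in> null_sets lebesgue \<longleftrightarrow> emeasure lborel A = 0"
  using assms by (simp add: null_sets_completion_iff null_sets_def)

theorem lemma3p3:
  fixes hm :: "nat \<Rightarrow> real \<Rightarrow> real"
    and M :: "nat set"
    and a b :: real
    and cm dm :: "nat \<Rightarrow> real"
    and K :: "real set"
  assumes Mne: "M \<noteq> {}"
    and cont: "\<And>m. m \<in> M \<Longrightarrow> continuous_on {a..b} (hm m)"
    and incr: "\<And>m. m \<in> M \<Longrightarrow> strict_mono_on {a..b} (hm m)"
    and range: "\<And>m. m \<in> M \<Longrightarrow> hm m ` {a..b} \<subseteq> {cm m..dm m}"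
    and summ: "\<And>x. x \<in> {a..b} \<Longrightarrow> summable (\<lambda>m. if m \<in> M then hm m x else 0)"
    and Kclosed: "closed K"
    and Ksub: "K \<subseteq> {a..b}"
    and null: "\<And>m. m \<in> M \<Longrightarrow> hm m ` K \<in> null_sets lebesgue"
  shows "continuous_on {a..b} (\<lambda>x. \<Sum>m. if m \<in> M then hm m x else 0)
    \<and> strict_mono_on {a..b} (\<lambda>x. \<Sum>m. if m \<in> M then hm m x else 0)
    \<and> (\<exists>c d. (\<lambda>x. \<Sum>m. if m \<in> M then hm m x else 0) ` {a..b} \<subseteq> {c..d})
    \<and> (\<lambda>x. \<Sum>m. if m \<in> M then hm m x else 0) ` K \<in> null_sets lebesgue"
proof (cases "a \<le> b")
  case False
  then show ?thesis using Ksub by simp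
next
  case ab: True
  let ?H = "\<lambda>x. \<Sum>m. if m \<in> M then hm m x else 0"
  note H = continuous_strict_mono_on_suminf[OF Mne cont incr summ]
  have compact_image_K: "compact (f ` K)" if "continuous_on {a..b} f" for f
    using compact_continuous_image[OF continuous_on_subset[OF that Ksub]] Kclosed Ksub
    by (meson bounded_subset compact_Icc compact_eq_bounded_closed)
  have "emeasure lborel (hm m ` K) = 0" if "m \<in> M" for m
    using null[OF that] closed_null_sets_lebesgue_iff compact_imp_closed compact_image_K[OF cont[OF that]]
    by blast
  then have "(\<lambda>m. if m \<in> M then emeasure lborel (hm m ` K) else 0) = (\<lambda>_. 0)"
    by (simp add: fun_eq_iff)
  then have "emeasure lborel (?H ` K) = 0"
    using emeasure_image_suminf[OF ab Mne cont incr summ _ Ksub] Kclosed by simp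
  then have "?H ` K \<in> null_sets lebesgue"
    using closed_null_sets_lebesgue_iff compact_imp_closed compact_image_K[OF H(1)] by blast
  moreover obtain c d where "?H ` {a..b} = {c..d}"
    using continuous_image_closed_interval[OF ab H(1)] by blast
  ultimately show ?thesis using H by blast
qed

end
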